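(* In the setting of a long-term scheme built from an arbitrary short-term rule $\boldsymbol\wp(\boldsymbol\gamma)$ with threshold $s$ — $\mathbf p_{\rm lt}(\boldsymbol\gamma)=\boldsymbol\wp(\boldsymbol\gamma)$ if $\overline{\boldsymbol\wp(\boldsymbol\gamma)}\le s$ and $\mathbf 0$ otherwise, with long-term average power $P(s)=\mathbb E[\overline{\boldsymbol\wp(\boldsymbol\gamma)}\mathbf 1\{\overline{\boldsymbol\wp(\boldsymbol\gamma)}\le s\}]$ — assume the outage probability satisfies $P_{\rm out}(s):=\Pr(\overline{\boldsymbol\wp(\boldsymbol\gamma)}>s)\doteq\mathcal K s^{-d(R)}$ as $s\to\infty$, for some $\mathcal K>0$ and finite $d(R)>0$, and that $P(s)$ is differentiable. Then: (i) if $d(R)>1$, $\lim_{s\to\infty}P(s)=P_{\rm th}<\infty$, so the outage probability tends to $0$ while the long-term average power stays bounded by $P_{\rm th}$ (long-term exponent $d_{\rm lt}(R)=\infty$); (ii) if $d(R)<1$, then $P(s)\to\infty$ and the long-term exponent \[ d_{\rm lt}(R):=\lim_{s\to\infty}\frac{-\log P_{\rm out}(s)}{\log P(s)} \] equals $\dfrac{d(R)}{1-d(R)}$.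
   Context: $\overline{\mathbf x}=\frac1B\sum_{b=1}^Bx_b$. The rule $\boldsymbol\wp$ is assumed to achieve the target rate $R$ whenever $\overline{\boldsymbol\wp(\boldsymbol\gamma)}\le s$, so outages occur exactly when $\overline{\boldsymbol\wp(\boldsymbol\gamma)}>s$. Exponential equality: $f(s)\doteq Ks^{-d}$ means $\lim_{s\to\infty}f(s)s^d=K$. *)

theory Defs
  imports "HOL-Probability.Probability"
begin

text \<open>Block average of a length-B power vector: overline x = (1/B) * sum_{b=1}^B x_b
  (blocks indexed 0..B-1).\<close>
definition blk_avg :: "nat \<Rightarrow> (nat \<Rightarrow> real) \<Rightarrow> real" where
  "blk_avg B x = (\<Sum>b<B. x b) / real B"

definition p_lt :: "nat \<Rightarrow> ('g \<Rightarrow> nat \<Rightarrow> real) \<Rightarrow> real \<Rightarrow> 'g \<Rightarrow> nat \<Rightarrow> real" where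
  "p_lt B wp s g = (if blk_avg B (wp g) \<le> s then wp g else (\<lambda>_. 0))"

text \<open>Long-term average power P(s) = E[ avg(wp(gamma)) * 1{avg(wp(gamma)) <= s} ].
  The channel state gamma is the identity random variable on the probability space M.\<close>
definition lt_power :: "'g measure \<Rightarrow> nat \<Rightarrow> ('g \<Rightarrow> nat \<Rightarrow> real) \<Rightarrow> real \<Rightarrow> real" where
  "lt_power M B wp s =
     integral\<^sup>L M (\<lambda>g. blk_avg B (wp g) * indicator {x. blk_avg B (wp x) \<le> s} g)"

definition p_out :: "'g measure \<Rightarrow> nat \<Rightarrow> ('g \<Rightarrow> nat \<Rightarrow> real) \<Rightarrow> real \<Rightarrow> real" where
  "p_out M B wp s = measure M {g \<in> space M. blk_avg B (wp g) > s}"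

end

theory Submission
  imports Defs "HOL-Real_Asymp.Real_Asymp"
begin

text \<open>
  Write \<open>X = avg(wp(gamma))\<close> for the (nonnegative) average power requested by the
  short-term rule, \<open>F(s) = Pr(X > s)\<close> for the outage probability and
  \<open>P(s) = E[X 1{X \<le> s}]\<close> for the long-term average power.

  Probabilistic layer: for any nonnegative random variable \<open>X\<close>, the truncated mean \<open>P\<close>
  is monotone, dominates the mass of the layer \<open>s/2 < X \<le> s\<close> weighted by \<open>s/2\<close>, and is
  bounded by the discrete layer-cake sum \<open>\<Sum>k<\<lceil>s\<rceil>. F(k)\<close>.

  Analytic layer: only these three inequalities, \<open>F \<le> 1\<close> and \<open>F(s) s^d \<rightarrow> K > 0\<close>
  are used.  For \<open>d > 1\<close> the layer-cake sum is dominated by a convergent series, so the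
  monotone \<open>P\<close> converges.  For \<open>d < 1\<close> the same sum and the layer bound sandwich \<open>P(s)\<close>
  between two multiples of \<open>s^(1-d)\<close>; then \<open>-ln F(s) \<sim> d ln s\<close> and \<open>ln P(s) \<sim> (1-d) ln s\<close>
  give the exponent \<open>d/(1-d)\<close>.
\<close>

section \<open>Tail probability and truncated mean of a random variable\<close>

definition tail_prob :: "'g measure \<Rightarrow> ('g \<Rightarrow> real) \<Rightarrow> real \<Rightarrow> real" where
  "tail_prob M X s = measure M {g \<in> space M. X g > s}"

definition trunc_mean :: "'g measure \<Rightarrow> ('g \<Rightarrow> real) \<Rightarrow> real \<Rightarrow> real" where
  "trunc_mean M X s = integral\<^sup>L M (\<lambda>g. X g * indicator {x. X x \<le> s} g)"

lemma p_out_eq_tail_prob: "p_out M B wp = tail_prob M (\<lambda>g. blk_avg B (wp g))"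
  by (simp add: fun_eq_iff p_out_def tail_prob_def)

lemma lt_power_eq_trunc_mean: "lt_power M B wp = trunc_mean M (\<lambda>g. blk_avg B (wp g))"
  by (simp add: fun_eq_iff lt_power_def trunc_mean_def)

lemma blk_avg_measurable:
  assumes "\<And>b. b < B \<Longrightarrow> (\<lambda>g. wp g b) \<in> borel_measurable M"
  shows "(\<lambda>g. blk_avg B (wp g)) \<in> borel_measurable M"
  unfolding blk_avg_def using assms by (intro borel_measurable_divide borel_measurable_sum) auto

lemma blk_avg_nonneg:
  assumes "\<And>b. b < B \<Longrightarrow> x b \<ge> 0"
  shows "blk_avg B x \<ge> 0"
  unfolding blk_avg_def using assms by (auto intro!: divide_nonneg_nonneg sum_nonneg)

text \<open>A nonnegative number \<open>x \<le> s\<close> is at most the number of integers \<open>k < \<lceil>s\<rceil>\<close> below it;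
  this is the pointwise form of the discrete layer-cake bound.\<close>

lemma le_count_integers_below:
  fixes x s :: real
  assumes "0 \<le> x" "x \<le> s"
  shows "x \<le> (\<Sum>k<nat \<lceil>s\<rceil>. if real k < x then 1 else 0)"
proof -
  have below: "k < nat \<lceil>t\<rceil> \<longleftrightarrow> real k < t" for k and t :: real
    by (simp add: zless_nat_eq_int_zless less_ceiling_iff)
  have "{k. k < nat \<lceil>s\<rceil> \<and> real k < x} = {..<nat \<lceil>x\<rceil>}"
    using assms(2) by (auto simp: below)
  then have "(\<Sum>k<nat \<lceil>s\<rceil>. if real k < x then 1 else 0) = real (nat \<lceil>x\<rceil>)"
    by (simp add: sum.If_cases Int_def)
  then show ?thesis using assms(1) by linarith
qed

context prob_space
begin

lemma integrable_truncated:
  fixes X :: "'a \<Rightarrow> real"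
  assumes X: "X \<in> borel_measurable M" and nn: "\<And>g. g \<in> space M \<Longrightarrow> X g \<ge> 0"
  shows "integrable M (\<lambda>g. X g * indicator {x. X x \<le> s} g)"
proof (rule integrable_const_bound[where B="\<bar>s\<bar>"])
  show "AE g in M. norm (X g * indicator {x. X x \<le> s} g) \<le> \<bar>s\<bar>"
    using nn by (intro AE_I2) (auto simp: indicator_def)
  have "(\<lambda>g. X g * indicator {x. X x \<le> s} g) = (\<lambda>g. if X g \<le> s then X g else 0)"
    by (auto simp: indicator_def)
  also have "\<dots> \<in> borel_measurable M" using X by measurable
  finally show "(\<lambda>g. X g * indicator {x. X x \<le> s} g) \<in> borel_measurable M" .
qed

lemma tail_prob_le_1: "tail_prob M X s \<le> 1"
  by (simp add: tail_prob_def)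

lemma trunc_mean_mono:
  fixes X :: "'a \<Rightarrow> real"
  assumes X: "X \<in> borel_measurable M" and nn: "\<And>g. g \<in> space M \<Longrightarrow> X g \<ge> 0"
    and "s \<le> t"
  shows "trunc_mean M X s \<le> trunc_mean M X t"
  unfolding trunc_mean_def using assms
  by (intro integral_mono integrable_truncated) (auto simp: indicator_def)

text \<open>Lower bound: on the event \<open>s/2 < X \<le> s\<close> the integrand is at least \<open>s/2\<close>.\<close>

lemma trunc_mean_ge_layer:
  fixes X :: "'a \<Rightarrow> real"
  assumes X: "X \<in> borel_measurable M" and nn: "\<And>g. g \<in> space M \<Longrightarrow> X g \<ge> 0"
    and s: "s > 0"
  shows "s/2 * (tail_prob M X (s/2) - tail_prob M X s) \<le> trunc_mean M X s"
proof -
  have sets: "{g \<in> space M. X g > t} \<in> sets M" for t using X by measurable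
  define A where "A = {g \<in> space M. X g > s/2} - {g \<in> space M. X g > s}"
  have A: "A \<in> sets M" unfolding A_def using sets by blast
  have "measure M A = tail_prob M X (s/2) - tail_prob M X s"
    unfolding A_def tail_prob_def using s by (subst finite_measure_Diff[OF sets sets]) auto
  then have "s/2 * (tail_prob M X (s/2) - tail_prob M X s) = integral\<^sup>L M (\<lambda>g. s/2 * indicator A g)"
    using A by (simp add: Int_absorb2 sets.sets_into_space)
  also have "\<dots> \<le> trunc_mean M X s"
    unfolding trunc_mean_def using s nn A
    by (intro integral_mono integrable_truncated[OF X nn] integrable_mult_right
        integrable_real_indicator) (auto simp: indicator_def A_def less_top[symmetric])
  finally show ?thesis .
qed

lemma trunc_mean_le_tail_sum:
  fixes X :: "'a \<Rightarrow> real"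
  assumes X: "X \<in> borel_measurable M" and nn: "\<And>g. g \<in> space M \<Longrightarrow> X g \<ge> 0"
    and "s \<ge> 0"
  shows "trunc_mean M X s \<le> (\<Sum>k<nat \<lceil>s\<rceil>. tail_prob M X (real k))"
proof -
  let ?I = "\<lambda>k. indicator {g \<in> space M. X g > real k} :: 'a \<Rightarrow> real"
  have sets: "{g \<in> space M. X g > t} \<in> sets M" for t using X by measurable
  have pointwise: "X g * indicator {x. X x \<le> s} g \<le> (\<Sum>k<nat \<lceil>s\<rceil>. ?I k g)"
    if g: "g \<in> space M" for g
  proof (cases "X g \<le> s")
    case True
    have "(\<Sum>k<nat \<lceil>s\<rceil>. ?I k g) = (\<Sum>k<nat \<lceil>s\<rceil>. if real k < X g then 1 else 0)"
      using g by (intro sum.cong) (auto simp: indicator_def)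
    then show ?thesis
      using le_count_integers_below[OF nn[OF g] True] True by simp
  qed (auto intro!: sum_nonneg)
  have "trunc_mean M X s \<le> integral\<^sup>L M (\<lambda>g. \<Sum>k<nat \<lceil>s\<rceil>. ?I k g)"
    unfolding trunc_mean_def using pointwise sets
    by (intro integral_mono integrable_truncated[OF X nn])
      (auto intro!: integrable_sum integrable_real_indicator simp: less_top[symmetric])
  also have "\<dots> = (\<Sum>k<nat \<lceil>s\<rceil>. tail_prob M X (real k))"
    using sets by (subst Bochner_Integration.integral_sum)
      (auto simp: tail_prob_def less_top[symmetric] intro!: integrable_real_indicator)
  finally show ?thesis .
qed

end

section \<open>Growth of the layer-cake sum\<close>

text \<open>Mean value bound for \<open>t \<mapsto> t^e\<close> on \<open>[n, n+1]\<close>, since its derivative decreases.\<close>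

lemma powr_increment_lower:
  fixes e :: real assumes e: "0 < e" "e < 1"
  shows "e * (real n + 1) powr (e - 1) \<le> (real n + 1) powr e - real n powr e"
proof (cases "n = 0")
  case False
  then have n: "real n > 0" by simp
  have "\<exists>z>real n. z < real n + 1 \<and>
      (real n + 1) powr e - real n powr e = ((real n + 1) - real n) * (e * z powr (e - 1))"
    using n by (intro MVT2) (auto intro!: has_real_derivative_powr)
  then obtain z where z: "z > real n" "z < real n + 1"
    and eq: "(real n + 1) powr e - real n powr e = e * z powr (e - 1)" by auto
  have "(real n + 1) powr (e - 1) \<le> z powr (e - 1)"
    using z n e by (intro powr_mono2') auto
  then show ?thesis using eq e by (simp add: mult_left_mono)
qed (use e in simp)

text \<open>Integral comparison: \<open>\<Sum>k\<le>n. k^(e-1) \<le> n^e / e\<close> for \<open>0 < e < 1\<close> (with \<open>0^(e-1) = 0\<close>).\<close>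

lemma sum_powr_le:
  fixes e :: real assumes e: "0 < e" "e < 1"
  shows "(\<Sum>k<Suc n. real k powr (e - 1)) \<le> real n powr e / e"
proof (induction n)
  case (Suc n)
  have "(\<Sum>k<Suc (Suc n). real k powr (e - 1))
      = (\<Sum>k<Suc n. real k powr (e - 1)) + (real n + 1) powr (e - 1)"
    by (simp add: add.commute)
  also have "\<dots> \<le> real n powr e / e + (real n + 1) powr (e - 1)" using Suc by simp
  also have "\<dots> = (real n powr e + e * (real n + 1) powr (e - 1)) / e"
    using e by (simp add: field_simps)
  also have "\<dots> \<le> (real n + 1) powr e / e"
    using powr_increment_lower[OF e, of n] e by (intro divide_right_mono) auto
  also have "\<dots> = real (Suc n) powr e / e" by (simp add: add.commute)
  finally show ?case .
qed simp

lemma tail_sum_bound: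
  fixes F :: "real \<Rightarrow> real" and K d :: real
  assumes F1: "\<And>s. F s \<le> 1" and K: "K > 0"
    and lim: "((\<lambda>s. F s * s powr d) \<longlongrightarrow> K) at_top"
  obtains C :: nat where "\<And>N. (\<Sum>k<N. F (real k)) \<le> real C + 2*K*(\<Sum>k<N. real k powr (-d))"
proof -
  have "eventually (\<lambda>s. F s * s powr d < 2*K) at_top" using order_tendstoD(2)[OF lim] K by auto
  then obtain S0 where S0: "\<And>s. s \<ge> S0 \<Longrightarrow> F s * s powr d < 2*K"
    by (auto simp: eventually_at_top_linorder)
  define C where "C = nat \<lceil>max S0 1\<rceil>"
  have Fk: "F (real k) \<le> (if k < C then 1 else 0) + 2*K*real k powr (-d)" for k
  proof (cases "k < C")
    case True
    then show ?thesis using F1[of k] K by (simp add: add_increasing2)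
  next
    case False
    then have k: "real k \<ge> S0" "real k > 0" unfolding C_def by linarith+
    then have "F k < 2*K / real k powr d" using S0 by (simp add: field_simps)
    then show ?thesis using False by (simp add: powr_minus_divide)
  qed
  have "(\<Sum>k<N. F (real k)) \<le> real C + 2*K*(\<Sum>k<N. real k powr (-d))" for N
  proof -
    have "(\<Sum>k<N. F (real k)) \<le> (\<Sum>k<N. (if k < C then 1 else 0) + 2*K*real k powr (-d))"
      by (intro sum_mono Fk)
    also have "\<dots> = real (card {k. k < N \<and> k < C}) + 2*K*(\<Sum>k<N. real k powr (-d))"
      by (simp add: sum.distrib sum_distrib_left sum.If_cases Int_def)
    also have "\<dots> \<le> real C + 2*K*(\<Sum>k<N. real k powr (-d))"
      using card_mono[of "{..<C}" "{k. k < N \<and> k < C}"] by auto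
    finally show ?thesis .
  qed
  then show ?thesis by (rule that)
qed

lemma mono_bounded_tendsto:
  fixes P :: "real \<Rightarrow> real"
  assumes mono: "mono P" and bnd: "\<And>s. P s \<le> C"
  shows "(P \<longlongrightarrow> (SUP s. P s)) at_top"
proof (rule order_tendstoI)
  have bdd: "bdd_above (range P)" using bnd by (intro bdd_aboveI2) auto
  fix a assume "a < (SUP s. P s)"
  then obtain x where "a < P x" using less_cSUP_iff[OF _ bdd] by auto
  then show "eventually (\<lambda>s. a < P s) at_top"
    unfolding eventually_at_top_linorder using mono
    by (intro exI[of _ x]) (auto intro: less_le_trans dest: monoD)
next
  have bdd: "bdd_above (range P)" using bnd by (intro bdd_aboveI2) auto
  fix b assume "(SUP s. P s) < b"
  then show "eventually (\<lambda>s. P s < b) at_top"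
    using cSUP_upper[OF _ bdd] by (intro always_eventually allI) (auto intro: le_less_trans)
qed

lemma power_tail_tendsto_0:
  fixes F :: "real \<Rightarrow> real"
  assumes lim: "((\<lambda>s. F s * s powr d) \<longlongrightarrow> K) at_top" and d: "d > 0"
  shows "(F \<longlongrightarrow> 0) at_top"
proof -
  have "((\<lambda>s. (F s * s powr d) * s powr (-d)) \<longlongrightarrow> K * 0) at_top"
    using d by (intro tendsto_mult lim tendsto_neg_powr filterlim_ident) auto
  moreover have "eventually (\<lambda>s. (F s * s powr d) * s powr (-d) = F s) at_top"
    using eventually_gt_at_top[of 0] by eventually_elim (simp add: powr_minus field_simps)
  ultimately show ?thesis by (simp add: tendsto_cong)
qed

section \<open>The regime \<open>d > 1\<close>: bounded long-term power\<close>

lemma bounded_power_converges: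
  fixes F P :: "real \<Rightarrow> real" and K d :: real
  assumes F1: "\<And>s. F s \<le> 1" and mono: "mono P"
    and upper: "\<And>s. s \<ge> 0 \<Longrightarrow> P s \<le> (\<Sum>k<nat \<lceil>s\<rceil>. F (real k))"
    and K: "K > 0" and d: "d > 1"
    and lim: "((\<lambda>s. F s * s powr d) \<longlongrightarrow> K) at_top"
  shows "\<exists>Pth. (P \<longlongrightarrow> Pth) at_top"
proof -
  obtain C :: nat where C: "\<And>N. (\<Sum>k<N. F (real k)) \<le> real C + 2*K*(\<Sum>k<N. real k powr (-d))"
    using tail_sum_bound[OF F1 K lim] by blast
  have summ: "summable (\<lambda>k. real k powr (-d))" using d by (simp add: summable_real_powr_iff)
  have "P s \<le> real C + 2*K * (\<Sum>k. real k powr (-d))" for s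
  proof -
    have "P s \<le> P (max s 0)" by (rule monoD[OF mono]) simp
    also have "\<dots> \<le> real C + 2*K*(\<Sum>k<nat \<lceil>max s 0\<rceil>. real k powr (-d))"
      using upper[of "max s 0"] C[of "nat \<lceil>max s 0\<rceil>"] by simp
    also have "\<dots> \<le> real C + 2*K * (\<Sum>k. real k powr (-d))"
      using K by (intro add_left_mono mult_left_mono sum_le_suminf summ) auto
    finally show ?thesis .
  qed
  then show ?thesis by (blast intro: mono_bounded_tendsto[OF mono])
qed

section \<open>The regime \<open>d < 1\<close>: power growing like \<open>s^(1-d)\<close>\<close>

text \<open>Upper bound: comparing the layer-cake sum with \<open>\<Sum>k<\<lceil>s\<rceil>. k^(-d) \<le> 2 s^(1-d)/(1-d)\<close>.\<close>

lemma power_upper_bound: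
  fixes F P :: "real \<Rightarrow> real" and K d :: real
  assumes F1: "\<And>s. F s \<le> 1"
    and upper: "\<And>s. s \<ge> 0 \<Longrightarrow> P s \<le> (\<Sum>k<nat \<lceil>s\<rceil>. F (real k))"
    and K: "K > 0" and d0: "d > 0" and d1: "d < 1"
    and lim: "((\<lambda>s. F s * s powr d) \<longlongrightarrow> K) at_top"
  obtains c where "c > 0" "\<And>s. s \<ge> 1 \<Longrightarrow> P s \<le> c * s powr (1 - d)"
proof -
  define e where "e = 1 - d"
  have e: "0 < e" "e < 1" using d0 d1 unfolding e_def by auto
  obtain C :: nat where C: "\<And>N. (\<Sum>k<N. F (real k)) \<le> real C + 2*K*(\<Sum>k<N. real k powr (-d))"
    using tail_sum_bound[OF F1 K lim] by blast
  define c where "c = real C + 4*K/e"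
  have "P s \<le> c * s powr e" if s: "s \<ge> 1" for s
  proof -
    define N where "N = nat \<lceil>s\<rceil>"
    have "(\<Sum>k<N. real k powr (-d)) \<le> (\<Sum>k<Suc N. real k powr (e - 1))"
      unfolding e_def by simp
    also have "\<dots> \<le> real N powr e / e" by (rule sum_powr_le[OF e])
    also have "\<dots> \<le> (2 * s) powr e / e"
      unfolding N_def using s e by (intro divide_right_mono powr_mono2) linarith+
    also have "\<dots> \<le> 2 * s powr e / e"
    proof -
      have "2 powr e \<le> 2 powr (1::real)" using e by (intro powr_mono) auto
      then show ?thesis using s e by (simp add: powr_mult divide_right_mono)
    qed
    finally have S: "(\<Sum>k<N. real k powr (-d)) \<le> 2 * s powr e / e" .
    have ge1: "s powr e \<ge> 1" using s e by (simp add: ge_one_powr_ge_zero)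
    have "P s \<le> real C + 2*K*(\<Sum>k<N. real k powr (-d))"
      unfolding N_def using s upper[of s] C[of "nat \<lceil>s\<rceil>"] by auto
    also have "\<dots> \<le> real C + 2*K*(2 * s powr e / e)"
      using S K by (intro add_left_mono mult_left_mono) auto
    also have "\<dots> \<le> c * s powr e"
      using ge1 mult_left_mono[OF ge1, of "real C"] unfolding c_def by (simp add: algebra_simps)
    finally show ?thesis .
  qed
  moreover have "c > 0" unfolding c_def using K e by (simp add: add_nonneg_pos)
  ultimately show ?thesis using that unfolding e_def by blast
qed

text \<open>Lower bound: the layer \<open>s/2 < X \<le> s\<close> has probability
  \<open>F(s/2) - F(s) \<approx> (2^d - 1) K s^(-d)\<close>, and contributes at least \<open>s/2\<close> times that.\<close>

lemma power_lower_bound: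
  fixes F P :: "real \<Rightarrow> real" and K d :: real
  assumes lower: "\<And>s. s > 0 \<Longrightarrow> s/2 * (F (s/2) - F s) \<le> P s"
    and K: "K > 0" and d: "d > 0"
    and lim: "((\<lambda>s. F s * s powr d) \<longlongrightarrow> K) at_top"
  obtains c where "c > 0" "eventually (\<lambda>s. c * s powr (1 - d) \<le> P s) at_top"
proof -
  define c where "c = (2 powr d - 1) * K / 4"
  have pd: "2 powr d > 1" using d powr_less_mono[of 0 d 2] by simp
  have lim_half: "((\<lambda>s. F (s/2) * (s/2) powr d) \<longlongrightarrow> K) at_top"
    by (rule filterlim_compose[OF lim]) real_asymp
  have "((\<lambda>s. 2 powr d * (F (s/2) * (s/2) powr d) - F s * s powr d) \<longlongrightarrow> 2 powr d * K - K) at_top"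
    by (intro tendsto_intros lim_half lim)
  moreover have "2 powr d * K - K > (2 powr d - 1) * K / 2"
    using mult_strict_left_mono[OF pd K] by (simp add: field_simps)
  ultimately have "eventually (\<lambda>s. 2 powr d * (F (s/2) * (s/2) powr d) - F s * s powr d
                                   > (2 powr d - 1) * K / 2) at_top"
    by (rule order_tendstoD(1))
  then have "eventually (\<lambda>s. c * s powr (1 - d) \<le> P s) at_top"
    using eventually_gt_at_top[of 0]
  proof eventually_elim
    case (elim s)
    have sd: "s powr d > 0" using elim by simp
    have "2 powr d * (F (s/2) * (s/2) powr d) - F s * s powr d = (F (s/2) - F s) * s powr d"
      using elim by (simp add: powr_divide algebra_simps)
    with elim have layer: "(2 powr d - 1) * K / 2 < (F (s/2) - F s) * s powr d" by simp
    have "c * s powr (1 - d) = ((2 powr d - 1) * K / 2) * s / s powr d / 2"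
      unfolding c_def using elim by (simp add: powr_diff)
    also have "\<dots> \<le> ((F (s/2) - F s) * s powr d) * s / s powr d / 2"
      using layer elim sd by (intro divide_right_mono mult_right_mono) auto
    also have "\<dots> = s/2 * (F (s/2) - F s)" using sd by (simp add: field_simps)
    also have "\<dots> \<le> P s" using lower elim by auto
    finally show ?case .
  qed
  moreover have "c > 0" unfolding c_def using pd K by simp
  ultimately show ?thesis using that by blast
qed

text \<open>Exponent transfer: if \<open>F(s) \<asymp> s^(-d)\<close> and \<open>P(s) \<asymp> s^e\<close> up to constants, then
  \<open>-ln F(s) / ln P(s) \<rightarrow> d/e\<close>, because both logarithms are \<open>\<pm>(exponent) ln s + O(1)\<close>.\<close>

lemma log_ratio_limit:
  fixes F P :: "real \<Rightarrow> real" and K d e c1 c2 :: real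
  assumes lim: "((\<lambda>s. F s * s powr d) \<longlongrightarrow> K) at_top" and K: "K > 0" and e: "e > 0"
    and c1: "c1 > 0" and low: "eventually (\<lambda>s. c1 * s powr e \<le> P s) at_top"
    and up: "eventually (\<lambda>s. P s \<le> c2 * s powr e) at_top"
  shows "((\<lambda>s. - ln (F s) / ln (P s)) \<longlongrightarrow> d / e) at_top"
proof -
  define a where "a = (\<lambda>s. ln (F s * s powr d))"
  define b where "b = (\<lambda>s. ln (P s / s powr e))"
  have ln_inf: "filterlim (\<lambda>s::real. ln s) at_infinity at_top"
    by (rule filterlim_at_top_imp_at_infinity[OF ln_at_top])
  have lim_a: "((\<lambda>s. a s / ln s) \<longlongrightarrow> 0) at_top"
    unfolding a_def using K by (intro tendsto_divide_0[OF tendsto_ln[OF lim] ln_inf]) auto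
  have b_bounds: "eventually (\<lambda>s. ln c1 \<le> b s \<and> b s \<le> ln c2) at_top"
    using low up eventually_gt_at_top[of 0]
  proof eventually_elim
    case (elim s)
    then have "c1 \<le> P s / s powr e" "P s / s powr e \<le> c2" by (simp_all add: field_simps)
    then show ?case unfolding b_def using c1 by simp
  qed
  have lim_b: "((\<lambda>s. b s / ln s) \<longlongrightarrow> 0) at_top"
  proof (rule tendsto_sandwich[OF _ _ tendsto_divide_0[OF tendsto_const ln_inf]
        tendsto_divide_0[OF tendsto_const ln_inf]])
    show "eventually (\<lambda>s. ln c1 / ln s \<le> b s / ln s) at_top"
      using b_bounds eventually_gt_at_top[of 1] by eventually_elim (simp add: divide_right_mono)
    show "eventually (\<lambda>s. b s / ln s \<le> ln c2 / ln s) at_top"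
      using b_bounds eventually_gt_at_top[of 1] by eventually_elim (simp add: divide_right_mono)
  qed
  have "eventually (\<lambda>s. F s * s powr d > 0) at_top"
    using lim K by (rule order_tendstoD(1))
  then have "eventually (\<lambda>s. (d - a s / ln s) / (e + b s / ln s) = - ln (F s) / ln (P s)) at_top"
    using low eventually_gt_at_top[of 1]
  proof eventually_elim
    case (elim s)
    have "P s > 0" using elim c1 by (smt (verit) mult_pos_pos powr_gt_zero)
    moreover have "F s > 0" using elim by (simp add: zero_less_mult_iff)
    ultimately have "a s = ln (F s) + d * ln s" "b s = ln (P s) - e * ln s"
      unfolding a_def b_def using elim by (simp_all add: ln_mult ln_div ln_powr)
    moreover have "ln s > 0" using elim by simp
    ultimately show ?case by (simp add: field_simps)
  qed
  moreover have "((\<lambda>s. (d - a s / ln s) / (e + b s / ln s)) \<longlongrightarrow> (d - 0) / (e + 0)) at_top"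
    using e by (intro tendsto_intros lim_a lim_b) auto
  ultimately show ?thesis by (simp add: tendsto_cong)
qed

lemma long_term_exponent:
  fixes F P :: "real \<Rightarrow> real" and K d :: real
  assumes F1: "\<And>s. F s \<le> 1"
    and lower: "\<And>s. s > 0 \<Longrightarrow> s/2 * (F (s/2) - F s) \<le> P s"
    and upper: "\<And>s. s \<ge> 0 \<Longrightarrow> P s \<le> (\<Sum>k<nat \<lceil>s\<rceil>. F (real k))"
    and K: "K > 0" and d0: "d > 0" and d1: "d < 1"
    and lim: "((\<lambda>s. F s * s powr d) \<longlongrightarrow> K) at_top"
  shows "filterlim P at_top at_top \<and> ((\<lambda>s. - ln (F s) / ln (P s)) \<longlongrightarrow> d / (1 - d)) at_top"
proof
  obtain c1 where c1: "c1 > 0" and low: "eventually (\<lambda>s. c1 * s powr (1 - d) \<le> P s) at_top"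
    using power_lower_bound[OF lower K d0 lim] by blast
  obtain c2 where up: "\<And>s. s \<ge> 1 \<Longrightarrow> P s \<le> c2 * s powr (1 - d)"
    using power_upper_bound[OF F1 upper K d0 d1 lim] by blast
  have "filterlim (\<lambda>s. c1 * s powr (1 - d)) at_top at_top"
    using d1 by (intro filterlim_tendsto_pos_mult_at_top[OF tendsto_const c1] real_powr_at_top) simp
  then show "filterlim P at_top at_top" by (rule filterlim_at_top_mono[OF _ low])
  have "eventually (\<lambda>s. P s \<le> c2 * s powr (1 - d)) at_top"
    using eventually_ge_at_top[of 1] by eventually_elim (rule up)
  then show "((\<lambda>s. - ln (F s) / ln (P s)) \<longlongrightarrow> d / (1 - d)) at_top"
    using d1 by (intro log_ratio_limit[OF lim K _ c1 low]) auto
qed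

theorem theorem6:
  fixes M :: "'g measure" and B :: nat and wp :: "'g \<Rightarrow> nat \<Rightarrow> real"
    and K d :: real
  assumes "prob_space M"
    and "B > 0"
    and "\<And>b. b < B \<Longrightarrow> (\<lambda>g. wp g b) \<in> borel_measurable M"
    and "\<And>g b. g \<in> space M \<Longrightarrow> b < B \<Longrightarrow> wp g b \<ge> 0"
    and "K > 0" and "d > 0"
    and "((\<lambda>s. p_out M B wp s * s powr d) \<longlongrightarrow> K) at_top"
    and "\<And>s. s > 0 \<Longrightarrow> lt_power M B wp differentiable (at s)"
  shows "(d > 1 \<longrightarrow>
            (\<exists>Pth. (lt_power M B wp \<longlongrightarrow> Pth) at_top) \<and>
            (p_out M B wp \<longlongrightarrow> 0) at_top)
       \<and> (d < 1 \<longrightarrow>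
            filterlim (lt_power M B wp) at_top at_top \<and>
            ((\<lambda>s. - ln (p_out M B wp s) / ln (lt_power M B wp s)) \<longlongrightarrow> d / (1 - d)) at_top)"
proof -
  interpret prob_space M by fact
  define X where "X = (\<lambda>g. blk_avg B (wp g))"
  have X: "X \<in> borel_measurable M" unfolding X_def using assms(3) by (rule blk_avg_measurable)
  have nn: "\<And>g. g \<in> space M \<Longrightarrow> X g \<ge> 0" unfolding X_def using assms(4) by (rule blk_avg_nonneg)
  have F: "p_out M B wp = tail_prob M X" and P: "lt_power M B wp = trunc_mean M X"
    unfolding X_def by (simp_all add: p_out_eq_tail_prob lt_power_eq_trunc_mean)
  note F1 = tail_prob_le_1[of X]
  have mono: "mono (trunc_mean M X)" using trunc_mean_mono[OF X nn] by (rule monoI)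
  note lower = trunc_mean_ge_layer[OF X nn] and upper = trunc_mean_le_tail_sum[OF X nn]
  note lim = assms(7)[unfolded F]
  show ?thesis unfolding F P
    using bounded_power_converges[OF F1 mono upper assms(5) _ lim]
      power_tail_tendsto_0[OF lim assms(6)]
      long_term_exponent[OF F1 lower upper assms(5,6) _ lim]
    by blast
qed

end
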